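(* Let $X$ be a (not necessarily locally compact) Hausdorff topological vector space, let $k:X\times X\to[0,+\infty]$ be a lower semicontinuous, symmetric, convex kernel function on $X\times X$, let $H\subset X$ be a bounded set with boundary $\partial H$, and let $\mu$ be a regular Borel probability measure on $X$. Then $\sup_{x\in H}U^\mu(x)=\sup_{x\in\partial H}U^\mu(x)$, where $U^\mu(x)=\int_X k(x,y)\,d\mu(y)$. *)

theory Defs
  imports "HOL-Analysis.Analysis" "HOL-Probability.Probability"
begin

definition tvs :: "'a::{real_vector, topological_space} itself \<Rightarrow> bool" where
  "tvs _ \<longleftrightarrow>
     continuous_on UNIV (\<lambda>p::'a \<times> 'a. fst p + snd p) \<and>
     continuous_on UNIV (\<lambda>p::real \<times> 'a. fst p *\<^sub>R snd p)"

definition tvs_bounded :: "'a::{real_vector, topological_space} set \<Rightarrow> bool" where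
  "tvs_bounded H \<longleftrightarrow>
     (\<forall>U. open U \<and> (0::'a) \<in> U \<longrightarrow>
        (\<exists>s>0. \<forall>t::real. t > s \<longrightarrow> H \<subseteq> (\<lambda>u. t *\<^sub>R u) ` U))"

definition lsc :: "('a::topological_space \<Rightarrow> ennreal) \<Rightarrow> bool" where
  "lsc f \<longleftrightarrow> (\<forall>c. open {x. c < f x})"

definition convex_ennreal_fun :: "('a::real_vector \<Rightarrow> ennreal) \<Rightarrow> bool" where
  "convex_ennreal_fun f \<longleftrightarrow>
     (\<forall>p q. \<forall>t::real. 0 \<le> t \<and> t \<le> 1 \<longrightarrow>
        f ((1 - t) *\<^sub>R p + t *\<^sub>R q) \<le> ennreal (1 - t) * f p + ennreal t * f q)"

definition regular_borel_measure :: "'a::topological_space measure \<Rightarrow> bool" where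
  "regular_borel_measure M \<longleftrightarrow>
     sets M = sets borel \<and>
     (\<forall>B\<in>sets M.
        emeasure M B = (SUP K\<in>{K. K \<subseteq> B \<and> compact K}. emeasure M K) \<and>
        emeasure M B = (INF U\<in>{U. B \<subseteq> U \<and> open U}. emeasure M U))"

definition potential :: "('a \<Rightarrow> 'a \<Rightarrow> ennreal) \<Rightarrow> 'a measure \<Rightarrow> 'a \<Rightarrow> ennreal" where
  "potential k \<mu> x = (\<integral>\<^sup>+ y. k x y \<partial>\<mu>)"

end

theory Submission
  imports Defs
begin

text \<open>Every point x of H lies on a line through x. As H is bounded, the extreme points of H on
  that line exist; they are frontier points of H with x between them, and convexity of the potential
  bounds its value at x by its values there. Conversely the potential is lower semicontinuous, so
  its supremum over the closure of H is already attained over H. Lower semicontinuity cannot come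
  from Fatou's lemma, as X need not be first countable; instead the integral is approximated from
  below by step functions on compact sets (inner regularity), which the tube lemma keeps below the
  kernel uniformly near the point.\<close>

lemma lsc_Pair_left:
  assumes "lsc (\<lambda>p. k (fst p) (snd p))"
  shows "lsc (k x)"
  unfolding lsc_def
proof
  fix c
  have "open (Pair x -` {p. c < k (fst p) (snd p)})"
    using assms unfolding lsc_def by (intro open_vimage) (auto intro: continuous_intros)
  then show "open {y. c < k x y}" by (simp add: vimage_def)
qed

lemma lsc_borel_measurable:
  assumes "lsc f" "sets M = sets borel"
  shows "f \<in> borel_measurable M"
proof (rule borel_measurableI_greater)
  fix c
  show "{x \<in> space M. c < f x} \<in> sets M"
    using assms sets_eq_imp_space_eq[OF assms(2)] unfolding lsc_def by simp
qed

lemma lsc_le_SUP_closure: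
  assumes "lsc f" "x \<in> closure H"
  shows "f x \<le> (SUP y\<in>H. f y)"
proof (rule ccontr)
  assume "\<not> f x \<le> (SUP y\<in>H. f y)"
  then have "x \<in> {z. (SUP y\<in>H. f y) < f z}" by (simp add: not_le)
  moreover have "open {z. (SUP y\<in>H. f y) < f z}" using assms(1) unfolding lsc_def by blast
  ultimately have "{z. (SUP y\<in>H. f y) < f z} \<inter> H \<noteq> {}"
    using assms(2) open_Int_closure_eq_empty by blast
  then obtain y where "y \<in> H" "(SUP y\<in>H. f y) < f y" by blast
  then show False by (simp add: SUP_upper leD)
qed

lemma lsc_tube:
  assumes "lsc (\<lambda>p. k (fst p) (snd p))" "compact K" "\<And>y. y \<in> K \<Longrightarrow> c < k x0 y"
  shows "\<exists>V. open V \<and> x0 \<in> V \<and> (\<forall>x\<in>V. \<forall>y\<in>K. c < k x y)"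
proof -
  have "open {p. c < k (fst p) (snd p)}" using assms(1) unfolding lsc_def by blast
  moreover have "{x0} \<times> K \<subseteq> {p. c < k (fst p) (snd p)}" using assms(3) by auto
  ultimately have "\<exists>V. x0 \<in> V \<and> open V \<and> V \<times> K \<subseteq> {p. c < k (fst p) (snd p)}"
    by (rule Elementary_Topology.tube_lemma[OF assms(2)])
  then obtain V where V: "x0 \<in> V" "open V" "V \<times> K \<subseteq> {p. c < k (fst p) (snd p)}"
    by blast
  have "c < k x y" if "x \<in> V" "y \<in> K" for x y
  proof -
    have "(x, y) \<in> {p. c < k (fst p) (snd p)}" using V(3) that by blast
    then show ?thesis by simp
  qed
  with V(1,2) show ?thesis by blast
qed

lemma ennreal_less_sum_SUP_choice:
  fixes f :: "'i \<Rightarrow> 'j \<Rightarrow> ennreal"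
  assumes "finite I" "\<And>i. i \<in> I \<Longrightarrow> J i \<noteq> {}" "c < (\<Sum>i\<in>I. SUP j\<in>J i. f i j)"
  shows "\<exists>ch. (\<forall>i\<in>I. ch i \<in> J i) \<and> c < (\<Sum>i\<in>I. f i (ch i))"
proof -
  have "\<exists>ch. (\<forall>i\<in>I. ch i \<in> J i) \<and> c < b + (\<Sum>i\<in>I. f i (ch i))"
    if "c < b + (\<Sum>i\<in>I. SUP j\<in>J i. f i j)" for b
    using assms(1,2) that
  proof (induction I arbitrary: b rule: finite_induct)
    case empty
    then show ?case by auto
  next
    case (insert i I)
    have "b + (\<Sum>i\<in>insert i I. SUP j\<in>J i. f i j)
        = (SUP j\<in>J i. f i j) + (b + (\<Sum>i\<in>I. SUP j\<in>J i. f i j))"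
      using insert.hyps by (simp add: algebra_simps)
    also have "\<dots> = (SUP j\<in>J i. f i j + (b + (\<Sum>i\<in>I. SUP j\<in>J i. f i j)))"
      using insert.prems(1) by (simp add: ennreal_SUP_add_left)
    finally obtain j where j: "j \<in> J i" "c < (b + f i j) + (\<Sum>i\<in>I. SUP j\<in>J i. f i j)"
      using insert.prems(2) by (auto simp: less_SUP_iff algebra_simps)
    from insert.IH[OF _ this(2)] insert.prems(1) obtain ch
      where ch: "\<forall>i\<in>I. ch i \<in> J i" "c < (b + f i j) + (\<Sum>i\<in>I. f i (ch i))"
      by auto
    have "(\<Sum>l\<in>I. f l ((ch(i := j)) l)) = (\<Sum>l\<in>I. f l (ch l))"
      using insert.hyps by (intro sum.cong) auto
    then show ?case
      using ch j insert.hyps by (intro exI[of _ "ch(i := j)"]) (auto simp: algebra_simps)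
  qed
  from this[of 0] assms(3) show ?thesis by simp
qed

lemma ennreal_mult_less_self:
  fixes t v :: ennreal
  assumes "t < 1" "0 < v" "v < top"
  shows "t * v < v"
proof -
  obtain r s where "v = ennreal r" "r > 0" "t = ennreal s" "0 \<le> s" "s < 1"
    using assms by (cases v rule: ennreal_cases; cases t rule: ennreal_cases) auto
  then show ?thesis by (simp add: ennreal_mult''[symmetric] ennreal_less_iff)
qed

lemma ennreal_less_imp_less_mult_less_one:
  fixes c x :: ennreal
  assumes "c < x"
  obtains t where "t < 1" "c < t * x"
proof -
  have "c < (SUP t\<in>{..<1::ennreal}. t * x)"
    using assms by (simp add: Sup_lessThan SUP_mult_right_ennreal[symmetric])
  then show ?thesis using that by (auto simp: less_SUP_iff)
qed

lemma nn_integral_less_imp_finite_simple_below: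
  assumes "f \<in> borel_measurable M" "c < integral\<^sup>N M f"
  obtains g where "simple_function M g" "\<And>x. g x \<le> f x" "\<And>x. g x < top" "c < integral\<^sup>N M g"
proof -
  obtain gs where gs: "\<And>i. simple_function M (gs i)" "incseq gs" "\<And>i x. gs i x < top"
      "\<And>x. (SUP i. gs i x) = f x"
    using borel_measurable_implies_simple_function_sequence'[OF assms(1)] by blast
  have "integral\<^sup>N M f = (SUP i. integral\<^sup>N M (gs i))"
    using gs by (simp add: nn_integral_monotone_convergence_SUP[symmetric]
        borel_measurable_simple_function)
  then obtain i where "c < integral\<^sup>N M (gs i)"
    using assms(2) by (auto simp: less_SUP_iff)
  moreover have "gs i x \<le> f x" for x
    using gs(4)[of x] by (metis SUP_upper UNIV_I)
  ultimately show ?thesis using that[of "gs i"] gs(1,3) by blast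
qed

lemma nn_integral_simple_function_level_sets:
  assumes "simple_function M g" "space M = UNIV"
  shows "integral\<^sup>N M g = (\<Sum>v\<in>g ` UNIV - {0}. v * emeasure M (g -` {v}))"
proof -
  have "integral\<^sup>N M g = (\<Sum>v\<in>g ` UNIV. v * emeasure M (g -` {v}))"
    using nn_integral_eq_simple_integral[OF assms(1)] assms(2) by (simp add: simple_integral_def)
  also have "\<dots> = (\<Sum>v\<in>g ` UNIV - {0}. v * emeasure M (g -` {v}))"
    using assms by (intro sum.mono_neutral_right) (auto simp: simple_function_def)
  finally show ?thesis .
qed

lemma nn_integral_less_imp_compact_steps:
  fixes M :: "'a::topological_space measure"
  assumes sets: "sets M = sets borel"
    and inner: "\<And>B. B \<in> sets M \<Longrightarrow> emeasure M B = (SUP K\<in>{K. K \<subseteq> B \<and> compact K}. emeasure M K)"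
    and f: "f \<in> borel_measurable M" and c: "c < integral\<^sup>N M f"
  obtains R :: "ennreal set" and K a where "finite R" "disjoint_family_on K R"
    "\<And>v. v \<in> R \<Longrightarrow> compact (K v)" "\<And>v y. v \<in> R \<Longrightarrow> y \<in> K v \<Longrightarrow> a v < f y"
    "c < (\<Sum>v\<in>R. a v * emeasure M (K v))"
proof -
  obtain g where g: "simple_function M g" "\<And>x. g x \<le> f x" "\<And>x. g x < top" "c < integral\<^sup>N M g"
    using nn_integral_less_imp_finite_simple_below[OF f c] by blast
  have space: "space M = UNIV" using sets_eq_imp_space_eq[OF sets] by simp
  define R where "R = g ` UNIV - {0}"
  define A where "A v = g -` {v}" for v
  have R: "finite R" using g(1) space by (simp add: simple_function_def R_def)
  have A: "A v \<in> sets M" for v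
    using simple_functionD(2)[OF g(1), of "{v}"] space by (simp add: A_def)
  have int_g: "integral\<^sup>N M g = (\<Sum>v\<in>R. v * emeasure M (A v))"
    unfolding R_def A_def by (rule nn_integral_simple_function_level_sets[OF g(1) space])
  \<comment> \<open>Scaling by t < 1 makes the step values strictly smaller than f, as the tube lemma requires.\<close>
  obtain t where t: "t < 1" "c < t * integral\<^sup>N M g"
    using ennreal_less_imp_less_mult_less_one[OF g(4)] by blast
  have ne: "{K. K \<subseteq> A v \<and> compact K} \<noteq> {}" for v
    by (auto intro!: exI[of _ "{}"])
  have "c < (\<Sum>v\<in>R. SUP K\<in>{K. K \<subseteq> A v \<and> compact K}. t * v * emeasure M K)"
    using t(2) by (simp add: int_g sum_distrib_left mult.assoc inner[OF A] SUP_mult_left_ennreal)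
  from ennreal_less_sum_SUP_choice[OF R ne this] obtain K
    where K: "\<forall>v\<in>R. K v \<in> {K. K \<subseteq> A v \<and> compact K}" "c < (\<Sum>v\<in>R. t * v * emeasure M (K v))"
    by blast
  show ?thesis
  proof (rule that[OF R _ _ _ K(2)])
    have "disjoint_family_on A R" by (auto simp: disjoint_family_on_def A_def)
    then show "disjoint_family_on K R"
      by (rule disjoint_family_on_bisimulation) (use K(1) in blast)
    show "compact (K v)" if "v \<in> R" for v using K(1) that by blast
    show "t * v < f y" if v: "v \<in> R" and y: "y \<in> K v" for v y
    proof -
      have "g y = v" using K(1) v y by (auto simp: A_def)
      then have "0 < v" "v < top" using v g(3)[of y] by (auto simp: R_def zero_less_iff_neq_zero)
      then have "t * v < v" by (rule ennreal_mult_less_self[OF t(1)])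
      also have "v \<le> f y" using g(2)[of y] \<open>g y = v\<close> by simp
      finally show ?thesis .
    qed
  qed
qed

lemma nn_integral_ge_disjoint_steps:
  fixes a :: "'i \<Rightarrow> ennreal"
  assumes "finite R" "disjoint_family_on K R" "\<And>v. v \<in> R \<Longrightarrow> K v \<in> sets M"
    and "\<And>v y. v \<in> R \<Longrightarrow> y \<in> K v \<Longrightarrow> a v \<le> f y"
  shows "(\<Sum>v\<in>R. a v * emeasure M (K v)) \<le> integral\<^sup>N M f"
proof -
  have "(\<Sum>v\<in>R. a v * emeasure M (K v)) = (\<Sum>v\<in>R. \<integral>\<^sup>+ y. a v * indicator (K v) y \<partial>M)"
    using assms(3) by (simp add: nn_integral_cmult_indicator)
  also have "\<dots> = (\<integral>\<^sup>+ y. (\<Sum>v\<in>R. a v * indicator (K v) y) \<partial>M)"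
    using assms(3) by (intro nn_integral_sum[symmetric]) auto
  also have "\<dots> \<le> integral\<^sup>N M f"
  proof (rule nn_integral_mono)
    fix y
    show "(\<Sum>v\<in>R. a v * indicator (K v) y) \<le> f y"
    proof (cases "\<exists>w\<in>R. y \<in> K w")
      case True
      then obtain w where w: "w \<in> R" "y \<in> K w" by blast
      have "(\<Sum>v\<in>R. a v * indicator (K v) y) = a w"
        by (rule sum_indicator_disjoint_family[OF assms(2) w(2) assms(1) w(1)])
      also have "\<dots> \<le> f y" using assms(4) w by blast
      finally show ?thesis .
    qed (auto intro: sum.neutral)
  qed
  finally show ?thesis .
qed

lemma lsc_potential:
  fixes k :: "'a::t2_space \<Rightarrow> 'a \<Rightarrow> ennreal"
  assumes lsc_k: "lsc (\<lambda>p. k (fst p) (snd p))" and reg: "regular_borel_measure \<mu>"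
  shows "lsc (potential k \<mu>)"
  unfolding lsc_def
proof (intro allI Topological_Spaces.openI)
  fix c x0 assume "x0 \<in> {x. c < potential k \<mu> x}"
  have sets: "sets \<mu> = sets borel" using reg unfolding regular_borel_measure_def by blast
  have inner: "\<And>B. B \<in> sets \<mu> \<Longrightarrow> emeasure \<mu> B = (SUP K\<in>{K. K \<subseteq> B \<and> compact K}. emeasure \<mu> K)"
    using reg unfolding regular_borel_measure_def by blast
  have "k x0 \<in> borel_measurable \<mu>" by (rule lsc_borel_measurable[OF lsc_Pair_left[OF lsc_k] sets])
  moreover have "c < integral\<^sup>N \<mu> (k x0)"
    using \<open>x0 \<in> {x. c < potential k \<mu> x}\<close> by (simp add: potential_def)
  ultimately obtain R :: "ennreal set" and K a where R: "finite R" "disjoint_family_on K R"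
      "\<And>v. v \<in> R \<Longrightarrow> compact (K v)" "\<And>v y. v \<in> R \<Longrightarrow> y \<in> K v \<Longrightarrow> a v < k x0 y"
      "c < (\<Sum>v\<in>R. a v * emeasure \<mu> (K v))"
    using nn_integral_less_imp_compact_steps[OF sets inner] by blast
  have "\<forall>v\<in>R. \<exists>V. open V \<and> x0 \<in> V \<and> (\<forall>x\<in>V. \<forall>y\<in>K v. a v < k x y)"
    using lsc_tube[OF lsc_k R(3) R(4)] by blast
  from bchoice[OF this] obtain V
    where V: "\<forall>v\<in>R. open (V v) \<and> x0 \<in> V v \<and> (\<forall>x\<in>V v. \<forall>y\<in>K v. a v < k x y)"
    by blast
  show "\<exists>T. open T \<and> x0 \<in> T \<and> T \<subseteq> {x. c < potential k \<mu> x}"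
  proof (intro exI[of _ "\<Inter>v\<in>R. V v"] conjI subsetI)
    show "open (\<Inter>v\<in>R. V v)" "x0 \<in> (\<Inter>v\<in>R. V v)" using V R(1) by auto
    fix x assume x: "x \<in> (\<Inter>v\<in>R. V v)"
    have "K v \<in> sets \<mu>" if "v \<in> R" for v
      using R(3)[OF that] sets by (simp add: borel_closed compact_imp_closed)
    moreover have "a v \<le> k x y" if "v \<in> R" "y \<in> K v" for v y
      using V x that by (blast intro: less_imp_le)
    ultimately have "(\<Sum>v\<in>R. a v * emeasure \<mu> (K v)) \<le> potential k \<mu> x"
      unfolding potential_def by (rule nn_integral_ge_disjoint_steps[OF R(1,2)])
    with R(5) have "c < potential k \<mu> x" by (rule less_le_trans)
    then show "x \<in> {x. c < potential k \<mu> x}" by simp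
  qed
qed

lemma convex_ennreal_fun_Pair_left:
  fixes k :: "'a::real_vector \<Rightarrow> 'b::real_vector \<Rightarrow> ennreal"
  assumes "convex_ennreal_fun (\<lambda>p. k (fst p) (snd p))"
  shows "convex_ennreal_fun (\<lambda>x. k x y)"
  unfolding convex_ennreal_fun_def
proof (intro allI impI)
  fix p q :: 'a and t :: real assume t: "0 \<le> t \<and> t \<le> 1"
  have "(1 - t) *\<^sub>R (p, y) + t *\<^sub>R (q, y) = ((1 - t) *\<^sub>R p + t *\<^sub>R q, y)"
    by (simp add: scaleR_left_distrib[symmetric])
  moreover have "k (fst ((1 - t) *\<^sub>R (p, y) + t *\<^sub>R (q, y))) (snd ((1 - t) *\<^sub>R (p, y) + t *\<^sub>R (q, y)))
      \<le> ennreal (1 - t) * k (fst (p, y)) (snd (p, y)) + ennreal t * k (fst (q, y)) (snd (q, y))"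
    using assms t unfolding convex_ennreal_fun_def by blast
  ultimately show "k ((1 - t) *\<^sub>R p + t *\<^sub>R q) y \<le> ennreal (1 - t) * k p y + ennreal t * k q y"
    by simp
qed

lemma convex_potential:
  assumes "\<And>y. convex_ennreal_fun (\<lambda>x. k x y)" "\<And>x. k x \<in> borel_measurable \<mu>"
  shows "convex_ennreal_fun (potential k \<mu>)"
  unfolding convex_ennreal_fun_def
proof (intro allI impI)
  fix p q and t :: real assume t: "0 \<le> t \<and> t \<le> 1"
  have "potential k \<mu> ((1 - t) *\<^sub>R p + t *\<^sub>R q)
      \<le> (\<integral>\<^sup>+ y. ennreal (1 - t) * k p y + ennreal t * k q y \<partial>\<mu>)"
    unfolding potential_def using assms(1) t
    by (intro nn_integral_mono) (simp add: convex_ennreal_fun_def)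
  also have "\<dots> = (\<integral>\<^sup>+ y. ennreal (1 - t) * k p y \<partial>\<mu>) + (\<integral>\<^sup>+ y. ennreal t * k q y \<partial>\<mu>)"
    using assms(2) by (intro nn_integral_add) auto
  also have "\<dots> = ennreal (1 - t) * potential k \<mu> p + ennreal t * potential k \<mu> q"
    unfolding potential_def using assms(2) by (simp add: nn_integral_cmult)
  finally show "potential k \<mu> ((1 - t) *\<^sub>R p + t *\<^sub>R q)
      \<le> ennreal (1 - t) * potential k \<mu> p + ennreal t * potential k \<mu> q" .
qed

lemma convex_ennreal_fun_le_closed_segment:
  assumes "convex_ennreal_fun f" "x \<in> closed_segment p q" "f p \<le> S" "f q \<le> S"
  shows "f x \<le> S"
proof -
  obtain t where t: "0 \<le> t" "t \<le> 1" "x = (1 - t) *\<^sub>R p + t *\<^sub>R q"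
    using assms(2) by (auto simp: in_segment)
  have "f x \<le> ennreal (1 - t) * f p + ennreal t * f q"
    using assms(1) t unfolding convex_ennreal_fun_def by blast
  also have "\<dots> \<le> ennreal (1 - t) * S + ennreal t * S"
    using assms(3,4) by (intro add_mono mult_left_mono) auto
  also have "\<dots> = S"
    using t by (simp add: distrib_right[symmetric] ennreal_plus[symmetric])
  finally show ?thesis .
qed

lemma tvs_continuous_on_scaleR_left:
  fixes w :: "'a::{real_vector, topological_space}"
  assumes "tvs TYPE('a)"
  shows "continuous_on UNIV (\<lambda>t::real. t *\<^sub>R w)"
proof -
  have "continuous_on UNIV (\<lambda>p::real \<times> 'a. fst p *\<^sub>R snd p)"
    using assms unfolding tvs_def by blast
  moreover have "continuous_on UNIV (\<lambda>t::real. (t, w))" by (intro continuous_intros)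
  ultimately have "continuous_on UNIV ((\<lambda>p::real \<times> 'a. fst p *\<^sub>R snd p) \<circ> (\<lambda>t. (t, w)))"
    by (intro continuous_on_compose) (auto elim: continuous_on_subset)
  then show ?thesis by (simp add: o_def)
qed

lemma tvs_bounded_bdd_above_line:
  fixes v :: "'a::{real_vector, t1_space}"
  assumes "tvs_bounded H" "v \<noteq> 0"
  shows "bdd_above {t. t *\<^sub>R v \<in> H}"
proof -
  have "open (- {v})" "(0::'a) \<in> - {v}" using assms(2) by auto
  then obtain s where s: "s > 0" "\<forall>t::real. t > s \<longrightarrow> H \<subseteq> (\<lambda>u. t *\<^sub>R u) ` (- {v})"
    using assms(1) unfolding tvs_bounded_def by blast
  have "t \<le> s" if "t *\<^sub>R v \<in> H" for t
  proof (rule ccontr)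
    assume "\<not> t \<le> s"
    then have "H \<subseteq> (\<lambda>u. t *\<^sub>R u) ` (- {v})" using s(2) by (simp add: not_le)
    with that have "t *\<^sub>R v \<in> (\<lambda>u. t *\<^sub>R u) ` (- {v})" by blast
    then obtain u where "t *\<^sub>R v = t *\<^sub>R u" "u \<in> - {v}" by (rule imageE)
    moreover have "t \<noteq> 0" using \<open>\<not> t \<le> s\<close> s(1) by simp
    ultimately show False by simp
  qed
  then show ?thesis by (intro bdd_aboveI[of _ s]) auto
qed

lemma tvs_Sup_line_in_frontier:
  fixes w :: "'a::{real_vector, topological_space}"
  assumes "tvs TYPE('a)" "a *\<^sub>R w \<in> H" "bdd_above {t. t *\<^sub>R w \<in> H}"
  shows "Sup {t. t *\<^sub>R w \<in> H} *\<^sub>R w \<in> frontier H"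
proof -
  define T where "T = {t. t *\<^sub>R w \<in> H}"
  define f where "f = (\<lambda>t::real. t *\<^sub>R w)"
  have cont: "continuous_on UNIV f" unfolding f_def by (rule tvs_continuous_on_scaleR_left[OF assms(1)])
  have "T \<noteq> {}" "bdd_above T" using assms(2,3) by (auto simp: T_def)
  then have "f (Sup T) \<in> f ` closure T" using closure_contains_Sup by blast
  also have "\<dots> \<subseteq> closure (f ` T)" using continuous_image_closure_subset[OF cont] by blast
  also have "\<dots> \<subseteq> closure H" by (intro closure_mono) (auto simp: T_def f_def)
  finally have "f (Sup T) \<in> closure H" .
  moreover have "f (Sup T) \<notin> interior H"
  proof
    assume "f (Sup T) \<in> interior H"
    moreover have "open (f -` interior H)" using cont by (intro open_vimage) auto
    ultimately obtain e where e: "e > 0" "ball (Sup T) e \<subseteq> f -` interior H"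
      using open_contains_ball by blast
    have "Sup T + e / 2 \<in> ball (Sup T) e" using e(1) by (simp add: dist_real_def)
    then have "f (Sup T + e / 2) \<in> H" using e(2) interior_subset by blast
    then have "Sup T + e / 2 \<in> T" by (simp add: T_def f_def)
    then have "Sup T + e / 2 \<le> Sup T" using \<open>bdd_above T\<close> by (rule cSup_upper)
    then show False using e(1) by simp
  qed
  ultimately show ?thesis by (simp add: frontier_def T_def f_def)
qed

lemma tvs_bounded_closed_segment_frontier:
  fixes x :: "'a::{real_vector, t1_space}"
  assumes "tvs TYPE('a)" "\<exists>v::'a. v \<noteq> 0" "tvs_bounded H" "x \<in> H"
  obtains p q where "p \<in> frontier H" "q \<in> frontier H" "x \<in> closed_segment p q"
proof -
  obtain v a where v: "v \<noteq> 0" "x = a *\<^sub>R v"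
  proof (cases "x = 0")
    case True
    with assms(2) that[of _ 0] show ?thesis by auto
  next
    case False
    with that[of x 1] show ?thesis by simp
  qed
  define b where "b = Sup {t. t *\<^sub>R v \<in> H}"
  define b' where "b' = Sup {t. t *\<^sub>R (- v) \<in> H}"
  have in_H: "a *\<^sub>R v \<in> H" "(- a) *\<^sub>R (- v) \<in> H" using assms(4) v(2) by auto
  have bdd: "bdd_above {t. t *\<^sub>R v \<in> H}" "bdd_above {t. t *\<^sub>R (- v) \<in> H}"
    using tvs_bounded_bdd_above_line[OF assms(3), of v] tvs_bounded_bdd_above_line[OF assms(3), of "- v"] v(1)
    by (simp_all del: scaleR_minus_right)
  have "a \<le> b" "- a \<le> b'"
    using in_H bdd unfolding b_def b'_def by (auto intro: cSup_upper)
  then have "a \<in> closed_segment (- b') b" by (simp add: closed_segment_eq_real_ivl)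
  then have "x \<in> closed_segment ((- b') *\<^sub>R v) (b *\<^sub>R v)"
    using closed_segment_linear_image[OF linear_scaleR_left, of "- b'" v b] v(2) by auto
  moreover have "b *\<^sub>R v \<in> frontier H" "b' *\<^sub>R (- v) \<in> frontier H"
    using tvs_Sup_line_in_frontier[OF assms(1) in_H(1) bdd(1)]
      tvs_Sup_line_in_frontier[OF assms(1) in_H(2) bdd(2)] by (simp_all add: b_def b'_def)
  ultimately show ?thesis using that[of "b' *\<^sub>R (- v)" "b *\<^sub>R v"] by simp
qed

theorem lemma3p7:
  fixes k :: "'a::{real_vector, t2_space} \<Rightarrow> 'a \<Rightarrow> ennreal"
    and H :: "'a set"
    and \<mu> :: "'a measure"
  assumes "tvs TYPE('a)"
    and "\<exists>x::'a. x \<noteq> 0"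
    and "lsc (\<lambda>p. k (fst p) (snd p))"
    and "\<And>x y. k x y = k y x"
    and "convex_ennreal_fun (\<lambda>p. k (fst p) (snd p))"
    and "tvs_bounded H"
    and "regular_borel_measure \<mu>"
    and "prob_space \<mu>"
  shows "(SUP x\<in>H. potential k \<mu> x) = (SUP x\<in>frontier H. potential k \<mu> x)"
proof (rule antisym)
  have "sets \<mu> = sets borel" using assms(7) unfolding regular_borel_measure_def by blast
  then have "k x \<in> borel_measurable \<mu>" for x
    by (rule lsc_borel_measurable[OF lsc_Pair_left[OF assms(3)]])
  then have convex: "convex_ennreal_fun (potential k \<mu>)"
    by (intro convex_potential convex_ennreal_fun_Pair_left[OF assms(5)])
  show "(SUP x\<in>H. potential k \<mu> x) \<le> (SUP x\<in>frontier H. potential k \<mu> x)"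
  proof (rule SUP_least)
    fix x assume "x \<in> H"
    then obtain p q where "p \<in> frontier H" "q \<in> frontier H" "x \<in> closed_segment p q"
      using tvs_bounded_closed_segment_frontier[OF assms(1,2,6)] by blast
    then show "potential k \<mu> x \<le> (SUP x\<in>frontier H. potential k \<mu> x)"
      by (intro convex_ennreal_fun_le_closed_segment[OF convex \<open>x \<in> closed_segment p q\<close>] SUP_upper)
  qed
  show "(SUP x\<in>frontier H. potential k \<mu> x) \<le> (SUP x\<in>H. potential k \<mu> x)"
  proof (rule SUP_least)
    fix x assume "x \<in> frontier H"
    then have "x \<in> closure H" by (simp add: frontier_def)
    then show "potential k \<mu> x \<le> (SUP x\<in>H. potential k \<mu> x)"
      by (rule lsc_le_SUP_closure[OF lsc_potential[OF assms(3,7)]])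
  qed
qed

end
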